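(* Let $n\ge 0$ and let $v(t)=\sum_{i=0}^{n+1}\mathbf{v}_iB^{n+1}_i(t)$ and $w(t)=\sum_{i=0}^{n+1}\mathbf{w}_iB^{n+1}_i(t)$ be real polynomials of degree at most $n+1$. Define the $(n+1)\times(n+1)$ Toeplitz matrices $T^{v,n}_{ij}=\binom{n+1}{j-i}\mathbf{v}_{j-i}$, $T^{w,n}_{ij}=\binom{n+1}{j-i}\mathbf{w}_{j-i}$, the Hankel matrices $H^{v,n}_{ij}=\binom{n+1}{i+j+1}\mathbf{v}_{i+j+1}$, $H^{w,n}_{ij}=\binom{n+1}{i+j+1}\mathbf{w}_{i+j+1}$ ($0\le i,j\le n$), and $\Delta^n=\mathrm{diag}\big(\binom{n}{j}\big)_{j=0}^n$. Then $$\mathrm{Bez}(v,w)=(\Delta^n)^{-1}\big[H^{v,n}T^{w,n}-H^{w,n}T^{v,n}\big](\Delta^n)^{-1}.$$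
   Context: Bernstein polynomials of degree $n$: $B^n_j(x)=\binom{n}{j}x^j(1-x)^{n-j}$. The Bernstein–Bézout matrix $\mathrm{Bez}(v,w)$ of two polynomials $v,w$ of degree at most $n+1$ is the unique $(n+1)\times(n+1)$ matrix $(b_{ij})_{i,j=0}^n$ satisfying $\frac{v(s)w(t)-v(t)w(s)}{s-t}=\sum_{i,j=0}^n b_{ij}B^n_i(s)B^n_j(t)$. Convention: $\binom{a}{b}=0$ if $b<0$ or $b>a$ (so entries with out-of-range indices vanish, regardless of the undefined coefficient they multiply). *)

theory Defs
  imports "HOL-Analysis.Weierstrass_Theorems"
begin

definition binom_int :: "nat \<Rightarrow> int \<Rightarrow> real" where
  "binom_int a b = (if b < 0 \<or> b > int a then 0 else real (a choose nat b))"

definition bern_poly :: "nat \<Rightarrow> (nat \<Rightarrow> real) \<Rightarrow> real \<Rightarrow> real" where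
  "bern_poly m c x = (\<Sum>i\<le>m. c i * Bernstein m i x)"

definition Bez :: "nat \<Rightarrow> (nat \<Rightarrow> real) \<Rightarrow> (nat \<Rightarrow> real) \<Rightarrow> nat \<Rightarrow> nat \<Rightarrow> real" where
  "Bez n v w = (THE b. (\<forall>i j. (n < i \<or> n < j) \<longrightarrow> b i j = 0) \<and>
     (\<forall>s t. s \<noteq> t \<longrightarrow>
        (bern_poly (n+1) v s * bern_poly (n+1) w t - bern_poly (n+1) v t * bern_poly (n+1) w s) / (s - t)
        = (\<Sum>i\<le>n. \<Sum>j\<le>n. b i j * Bernstein n i s * Bernstein n j t)))"

definition toeplitz_mat :: "nat \<Rightarrow> (nat \<Rightarrow> real) \<Rightarrow> nat \<Rightarrow> nat \<Rightarrow> real" where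
  "toeplitz_mat n c i j = binom_int (n+1) (int j - int i) * c (nat (int j - int i))"

definition hankel_mat :: "nat \<Rightarrow> (nat \<Rightarrow> real) \<Rightarrow> nat \<Rightarrow> nat \<Rightarrow> real" where
  "hankel_mat n c i j = real ((n+1) choose (i+j+1)) * c (i+j+1)"

end

theory Submission
  imports Defs "HOL-Computational_Algebra.Polynomial"
begin

text \<open>Write \<open>V a = C(n+1,a) v a\<close>, \<open>W b = C(n+1,b) w b\<close> and \<open>P a x = x^a (1-x)^(n+1-a)\<close>,
  so that \<open>v = \<Sum>a. V a P a\<close> and \<open>w = \<Sum>b. W b P b\<close>. The divided difference
  \<open>(P a s P b t - P b s P a t) / (s - t)\<close> telescopes into \<open>K a b - K b a\<close>, where
  \<open>K = bez_kernel\<close> is a sum of the products \<open>s^i (1-s)^(n-i) t^j (1-t)^(n-j)\<close> with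
  \<open>i = a-1-k\<close>, \<open>j = b+k\<close>. Substituting \<open>a = i+k+1\<close>, \<open>b = j-k\<close> shows that the coefficient
  of this product in \<open>\<Sum>a b. V a W b K a b\<close> is \<open>(H\<^sup>v T\<^sup>w) i j\<close>. As
  \<open>Bernstein n i s = C(n,i) s^i (1-s)^(n-i)\<close>, dividing by the binomials yields a matrix satisfying
  the defining identity of the Bezoutian, which determines it because the Bernstein polynomials
  are linearly independent.\<close>

lemma Bernstein_sum_eq_0_imp_coeff_eq_0:
  fixes a :: "nat \<Rightarrow> real"
  assumes "finite F" and "\<forall>s\<in>{0<..<1} - F. (\<Sum>i\<le>n. a i * Bernstein n i s) = 0" and "i \<le> n"
  shows "a i = 0"
proof -
  define q where "q = (\<Sum>i\<le>n. monom (a i * real (n choose i)) i)"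
  have poly_q: "poly q x = (\<Sum>i\<le>n. a i * real (n choose i) * x^i)" for x
    by (simp add: q_def poly_sum poly_monom)
  have roots: "(\<lambda>s. s / (1-s)) ` ({0<..<1} - F) \<subseteq> {x. poly q x = 0}"
  proof
    fix x assume "x \<in> (\<lambda>s. s / (1-s)) ` ({0<..<1} - F)"
    then obtain s where s: "s \<in> {0<..<1} - F" and x: "x = s / (1-s)" by auto
    have ne: "1 - s \<noteq> 0" using s by auto
    have "(\<Sum>i\<le>n. a i * Bernstein n i s) = (1-s)^n * poly q x"
      unfolding poly_q x sum_distrib_left
    proof (rule sum.cong[OF refl])
      fix i assume "i \<in> {..n}"
      then have "(1-s)^(n-i) = (1-s)^n / (1-s)^i" using ne by (simp add: power_diff)
      then show "a i * Bernstein n i s = (1-s)^n * (a i * real (n choose i) * (s / (1-s))^i)"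
        using ne by (simp add: Bernstein_def power_divide)
    qed
    then show "x \<in> {x. poly q x = 0}" using assms(2) s ne by simp
  qed
  have "inj_on (\<lambda>s. s / (1-s)) ({0<..<1} - F)"
    by (rule inj_onI) (auto simp: field_simps)
  moreover have "infinite ({0<..<1::real} - F)"
    using assms(1) Diff_infinite_finite infinite_Ioo[of "0::real" 1] by auto
  ultimately have "infinite ((\<lambda>s. s / (1-s)) ` ({0<..<1} - F))"
    using finite_imageD by blast
  then have "q = 0" using roots poly_roots_finite finite_subset by blast
  moreover have "coeff q i = a i * real (n choose i)"
    unfolding q_def by (rule coeff_sum_monom[OF assms(3)])
  ultimately show ?thesis using assms(3) by simp
qed

lemma Bernstein_tensor_sum_eq_0_imp_coeff_eq_0:
  fixes c :: "nat \<Rightarrow> nat \<Rightarrow> real"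
  assumes "\<And>s t. s \<noteq> t \<Longrightarrow> (\<Sum>i\<le>n. \<Sum>j\<le>n. c i j * Bernstein n i s * Bernstein n j t) = 0"
    and "i \<le> n" and "j \<le> n"
  shows "c i j = 0"
proof -
  have "(\<Sum>j\<le>n. c i j * Bernstein n j t) = 0" for t
  proof (rule Bernstein_sum_eq_0_imp_coeff_eq_0[where F = "{t}", OF _ _ assms(2)])
    show "\<forall>s\<in>{0<..<1} - {t}. (\<Sum>i\<le>n. (\<Sum>j\<le>n. c i j * Bernstein n j t) * Bernstein n i s) = 0"
      using assms(1) by (simp add: sum_distrib_left sum_distrib_right mult_ac)
  qed simp
  then show ?thesis
    by (intro Bernstein_sum_eq_0_imp_coeff_eq_0[where F = "{}", OF _ _ assms(3)]) auto
qed

lemma Bez_eqI: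
  assumes zero: "\<And>i j. n < i \<or> n < j \<Longrightarrow> b i j = 0"
    and identity: "\<And>s t. s \<noteq> t \<Longrightarrow>
      (bern_poly (n+1) v s * bern_poly (n+1) w t - bern_poly (n+1) v t * bern_poly (n+1) w s) / (s - t)
      = (\<Sum>i\<le>n. \<Sum>j\<le>n. b i j * Bernstein n i s * Bernstein n j t)"
  shows "Bez n v w = b"
  unfolding Bez_def
proof (rule the_equality)
  fix b' assume b': "(\<forall>i j. (n < i \<or> n < j) \<longrightarrow> b' i j = 0) \<and> (\<forall>s t. s \<noteq> t \<longrightarrow>
      (bern_poly (n+1) v s * bern_poly (n+1) w t - bern_poly (n+1) v t * bern_poly (n+1) w s) / (s - t)
      = (\<Sum>i\<le>n. \<Sum>j\<le>n. b' i j * Bernstein n i s * Bernstein n j t))"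
  have "b' i j = b i j" for i j
  proof (cases "i \<le> n \<and> j \<le> n")
    case True
    have "b' i j - b i j = 0"
    proof (rule Bernstein_tensor_sum_eq_0_imp_coeff_eq_0[where n = n])
      fix s t :: real assume "s \<noteq> t"
      then show "(\<Sum>i\<le>n. \<Sum>j\<le>n. (b' i j - b i j) * Bernstein n i s * Bernstein n j t) = 0"
        using b' identity[of s t] by (simp add: left_diff_distrib sum_subtractf)
    qed (use True in auto)
    then show ?thesis by simp
  next
    case False
    then show ?thesis using b' zero by auto
  qed
  then show "b' = b" by blast
qed (use assms in auto)

definition bez_kernel :: "nat \<Rightarrow> nat \<Rightarrow> nat \<Rightarrow> real \<Rightarrow> real \<Rightarrow> real" where
  "bez_kernel n a b s t =
     (\<Sum>k<min a (n+1-b). s^(a-1-k) * (1-s)^(n+1-a+k) * t^(b+k) * (1-t)^(n-b-k))"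

lemma bez_kernel_eq_sum_atMost:
  "bez_kernel n a b s t =
    (\<Sum>k\<le>n. (if k < a then s^(a-1-k) * (1-s)^(n+1-a+k) else 0) *
            (if b + k \<le> n then t^(b+k) * (1-t)^(n-b-k) else 0))"
proof -
  have "(\<Sum>k\<le>n. (if k < a then s^(a-1-k) * (1-s)^(n+1-a+k) else 0) *
            (if b + k \<le> n then t^(b+k) * (1-t)^(n-b-k) else 0)) =
      (\<Sum>k\<le>n. if k < a \<and> b + k \<le> n then s^(a-1-k) * (1-s)^(n+1-a+k) * t^(b+k) * (1-t)^(n-b-k) else 0)"
    by (intro sum.cong) auto
  also have "\<dots> = (\<Sum>k\<in>{k\<in>{..n}. k < a \<and> b + k \<le> n}. s^(a-1-k) * (1-s)^(n+1-a+k) * t^(b+k) * (1-t)^(n-b-k))"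
    by (rule sum.inter_filter[symmetric]) simp
  also have "{k\<in>{..n}. k < a \<and> b + k \<le> n} = {..<min a (n+1-b)}" by auto
  finally show ?thesis unfolding bez_kernel_def ..
qed

lemma diff_mult_bez_kernel:
  assumes "a \<le> n+1" and m: "m = min a (n+1-b)"
  shows "(s - t) * bez_kernel n a b s t =
    s^a * (1-s)^(n+1-a) * t^b * (1-t)^(n+1-b) - s^(a-m) * (1-s)^(n+1-a+m) * t^(b+m) * (1-t)^(n+1-b-m)"
proof -
  define q where "q k = s^(a-k) * (1-s)^(n+1-a+k) * t^(b+k) * (1-t)^(n+1-b-k)" for k
  have "(s - t) * (s^(a-1-k) * (1-s)^(n+1-a+k) * t^(b+k) * (1-t)^(n-b-k)) = q k - q (Suc k)"
    if "k < m" for k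
  proof -
    have exps: "a - k = Suc (a-1-k)" "n+1-b-k = Suc (n-b-k)" "n+1-a+Suc k = Suc (n+1-a+k)"
      "a - Suc k = a-1-k" "n+1-b-Suc k = n-b-k" "b + Suc k = Suc (b+k)"
      using that assms by auto
    show ?thesis unfolding q_def exps power_Suc by (simp add: algebra_simps)
  qed
  then have "(s - t) * bez_kernel n a b s t = (\<Sum>k<m. q k - q (Suc k))"
    unfolding bez_kernel_def sum_distrib_left m by (intro sum.cong) auto
  also have "\<dots> = q 0 - q m" by (rule sum_lessThan_telescope')
  finally show ?thesis by (simp add: q_def)
qed

lemma diff_mult_bez_kernel_antisym:
  assumes "a \<le> n+1" and "b \<le> n+1"
  shows "(s - t) * (bez_kernel n a b s t - bez_kernel n b a s t) =
    s^a * (1-s)^(n+1-a) * t^b * (1-t)^(n+1-b) - s^b * (1-s)^(n+1-b) * t^a * (1-t)^(n+1-a)"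
proof -
  have boundary: "s^(a-m) * (1-s)^(n+1-a+m) * t^(b+m) * (1-t)^(n+1-b-m) =
      s^(b-m') * (1-s)^(n+1-b+m') * t^(a+m') * (1-t)^(n+1-a-m')"
    if "m = min a (n+1-b)" "m' = min b (n+1-a)" for m m'
  proof -
    have "a - m = b - m'" "n+1-a+m = n+1-b+m'" "b + m = a + m'" "n+1-b-m = n+1-a-m'"
      using that assms by (auto simp: min_def)
    then show ?thesis by simp
  qed
  show ?thesis
    unfolding right_diff_distrib diff_mult_bez_kernel[OF assms(1) refl]
      diff_mult_bez_kernel[OF assms(2) refl] boundary[OF refl refl]
    by simp
qed

lemma hankel_column_sum:
  assumes "k \<le> n"
  shows "(\<Sum>i\<le>n. hankel_mat n u i k * (s^i * (1-s)^(n-i))) =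
    (\<Sum>a\<le>n+1. real ((n+1) choose a) * u a * (if k < a then s^(a-1-k) * (1-s)^(n+1-a+k) else 0))"
    (is "_ = (\<Sum>a\<le>n+1. ?g a)")
proof -
  have "(\<Sum>a\<le>n+1. ?g a) = (\<Sum>a\<in>{0..k+(n+1)}. ?g a)"
    by (rule sum.mono_neutral_left) auto
  also have "\<dots> = (\<Sum>a\<in>{k+1..k+(n+1)}. ?g a)"
    by (subst sum.ub_add_nat[of 0 k _ "n+1"]) auto
  also have "\<dots> = (\<Sum>i\<in>{0..n}. ?g (i+(k+1)))"
    using sum.shift_bounds_cl_nat_ivl[of ?g 0 "k+1" n] by (simp add: add.commute)
  also have "\<dots> = (\<Sum>i\<le>n. hankel_mat n u i k * (s^i * (1-s)^(n-i)))"
  proof (rule sum.cong)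
    fix i assume "i \<in> {..n}"
    then show "?g (i + (k+1)) = hankel_mat n u i k * (s^i * (1-s)^(n-i))"
      unfolding hankel_mat_def
      by (cases "i + k \<le> n") (auto simp: binomial_eq_0 algebra_simps simp del: binomial_Suc_Suc)
  qed auto
  finally show ?thesis ..
qed

lemma toeplitz_row_sum:
  assumes "k \<le> n"
  shows "(\<Sum>j\<le>n. toeplitz_mat n z k j * (t^j * (1-t)^(n-j))) =
    (\<Sum>b\<le>n+1. real ((n+1) choose b) * z b * (if b + k \<le> n then t^(b+k) * (1-t)^(n-b-k) else 0))"
    (is "_ = (\<Sum>b\<le>n+1. ?h b)")
proof -
  have "(\<Sum>j\<le>n. toeplitz_mat n z k j * (t^j * (1-t)^(n-j))) =
      (\<Sum>j\<in>{k..(n-k)+k}. toeplitz_mat n z k j * (t^j * (1-t)^(n-j)))"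
    by (rule sum.mono_neutral_right) (auto simp: assms toeplitz_mat_def binom_int_def)
  also have "\<dots> = (\<Sum>b\<in>{0..n-k}. ?h b)"
    by (subst sum.shift_bounds_cl_nat_ivl[of _ 0, simplified])
       (rule sum.cong, use assms in \<open>auto simp: toeplitz_mat_def binom_int_def\<close>)
  also have "\<dots> = (\<Sum>b\<le>n+1. ?h b)"
    by (rule sum.mono_neutral_left) auto
  finally show ?thesis .
qed

lemma hankel_toeplitz_Bernstein_sum:
  "(\<Sum>i\<le>n. \<Sum>j\<le>n. (\<Sum>k\<le>n. hankel_mat n u i k * toeplitz_mat n z k j) *
      (s^i * (1-s)^(n-i) * (t^j * (1-t)^(n-j)))) =
   (\<Sum>a\<le>n+1. \<Sum>b\<le>n+1. real ((n+1) choose a) * u a * (real ((n+1) choose b) * z b) * bez_kernel n a b s t)"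
proof -
  have swap: "(\<Sum>k\<le>n. (\<Sum>i\<le>n. hankel_mat n u i k * (s^i * (1-s)^(n-i))) *
          (\<Sum>j\<le>n. toeplitz_mat n z k j * (t^j * (1-t)^(n-j)))) =
     (\<Sum>i\<le>n. \<Sum>j\<le>n. \<Sum>k\<le>n. hankel_mat n u i k * (s^i * (1-s)^(n-i)) *
          (toeplitz_mat n z k j * (t^j * (1-t)^(n-j))))"
    unfolding sum_product by (subst sum.swap, rule sum.cong[OF refl], rule sum.swap)
  have "(\<Sum>i\<le>n. \<Sum>j\<le>n. (\<Sum>k\<le>n. hankel_mat n u i k * toeplitz_mat n z k j) *
      (s^i * (1-s)^(n-i) * (t^j * (1-t)^(n-j)))) =
    (\<Sum>k\<le>n. (\<Sum>i\<le>n. hankel_mat n u i k * (s^i * (1-s)^(n-i))) *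
            (\<Sum>j\<le>n. toeplitz_mat n z k j * (t^j * (1-t)^(n-j))))"
    unfolding swap by (intro sum.cong refl) (simp add: sum_distrib_left sum_distrib_right mult_ac)
  also have "\<dots> = (\<Sum>k\<le>n. \<Sum>a\<le>n+1. \<Sum>b\<le>n+1. real ((n+1) choose a) * u a * (real ((n+1) choose b) * z b) *
      ((if k < a then s^(a-1-k) * (1-s)^(n+1-a+k) else 0) *
       (if b + k \<le> n then t^(b+k) * (1-t)^(n-b-k) else 0)))"
    by (intro sum.cong refl, simp only: atMost_iff hankel_column_sum toeplitz_row_sum sum_product)
      (simp add: mult_ac)
  also have "\<dots> = (\<Sum>a\<le>n+1. \<Sum>b\<le>n+1. real ((n+1) choose a) * u a * (real ((n+1) choose b) * z b) * bez_kernel n a b s t)"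
    unfolding bez_kernel_eq_sum_atMost sum_distrib_left
    by (subst sum.swap, rule sum.cong[OF refl], subst sum.swap) simp
  finally show ?thesis .
qed

lemma bern_poly_cross_difference:
  "bern_poly (n+1) v s * bern_poly (n+1) w t - bern_poly (n+1) v t * bern_poly (n+1) w s =
   (s - t) * (\<Sum>i\<le>n. \<Sum>j\<le>n.
      (\<Sum>k\<le>n. hankel_mat n v i k * toeplitz_mat n w k j - hankel_mat n w i k * toeplitz_mat n v k j) *
      (s^i * (1-s)^(n-i) * (t^j * (1-t)^(n-j))))"
proof -
  define V where "V a = real ((n+1) choose a) * v a" for a
  define W where "W a = real ((n+1) choose a) * w a" for a
  define P where "P a x = x^a * (1-x)^(n+1-a)" for a and x :: real
  define K where "K a b = bez_kernel n a b s t" for a b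
  have bern_V: "bern_poly (n+1) v x = (\<Sum>a\<le>n+1. V a * P a x)"
    and bern_W: "bern_poly (n+1) w x = (\<Sum>a\<le>n+1. W a * P a x)" for x
    by (simp_all add: bern_poly_def Bernstein_def V_def W_def P_def mult_ac)
  have "(\<Sum>i\<le>n. \<Sum>j\<le>n.
      (\<Sum>k\<le>n. hankel_mat n v i k * toeplitz_mat n w k j - hankel_mat n w i k * toeplitz_mat n v k j) *
      (s^i * (1-s)^(n-i) * (t^j * (1-t)^(n-j)))) =
    (\<Sum>a\<le>n+1. \<Sum>b\<le>n+1. V a * W b * K a b) - (\<Sum>a\<le>n+1. \<Sum>b\<le>n+1. W a * V b * K a b)"
    unfolding V_def W_def K_def hankel_toeplitz_Bernstein_sum[symmetric]
    by (simp add: sum_subtractf left_diff_distrib)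
  also have "(\<Sum>a\<le>n+1. \<Sum>b\<le>n+1. W a * V b * K a b) = (\<Sum>a\<le>n+1. \<Sum>b\<le>n+1. V a * W b * K b a)"
    by (subst sum.swap) (simp add: mult_ac)
  finally have "(s - t) * (\<Sum>i\<le>n. \<Sum>j\<le>n.
      (\<Sum>k\<le>n. hankel_mat n v i k * toeplitz_mat n w k j - hankel_mat n w i k * toeplitz_mat n v k j) *
      (s^i * (1-s)^(n-i) * (t^j * (1-t)^(n-j)))) =
    (\<Sum>a\<le>n+1. \<Sum>b\<le>n+1. V a * W b * ((s - t) * (K a b - K b a)))"
    by (simp add: sum_subtractf sum_distrib_left right_diff_distrib mult_ac del: sum.atMost_Suc)
  also have "\<dots> = (\<Sum>a\<le>n+1. \<Sum>b\<le>n+1. V a * W b * (P a s * P b t - P b s * P a t))"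
    by (intro sum.cong refl) (simp add: K_def P_def diff_mult_bez_kernel_antisym mult_ac)
  also have "\<dots> = bern_poly (n+1) v s * bern_poly (n+1) w t - bern_poly (n+1) v t * bern_poly (n+1) w s"
  proof -
    have "bern_poly (n+1) v x * bern_poly (n+1) w y = (\<Sum>a\<le>n+1. \<Sum>b\<le>n+1. V a * W b * (P a x * P b y))"
      for x y unfolding bern_V bern_W sum_product by (simp add: mult_ac del: sum.atMost_Suc)
    then show ?thesis
      by (simp add: sum_subtractf right_diff_distrib mult_ac del: sum.atMost_Suc)
  qed
  finally show ?thesis by simp
qed

theorem corollary2p6:
  fixes n :: nat and v w :: "nat \<Rightarrow> real"
  assumes "i \<le> n" and "j \<le> n"
  shows "Bez n v w i j =
    (1 / real (n choose i)) *
    (\<Sum>k\<le>n. hankel_mat n v i k * toeplitz_mat n w k j - hankel_mat n w i k * toeplitz_mat n v k j) *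
    (1 / real (n choose j))"
proof -
  define M where "M i j =
    (\<Sum>k\<le>n. hankel_mat n v i k * toeplitz_mat n w k j - hankel_mat n w i k * toeplitz_mat n v k j)" for i j
  define b where "b i j =
    (if i \<le> n \<and> j \<le> n then (1 / real (n choose i)) * M i j * (1 / real (n choose j)) else 0)" for i j
  have "Bez n v w = b"
  proof (rule Bez_eqI)
    fix s t :: real assume "s \<noteq> t"
    have "(\<Sum>i\<le>n. \<Sum>j\<le>n. b i j * Bernstein n i s * Bernstein n j t) =
        (\<Sum>i\<le>n. \<Sum>j\<le>n. M i j * (s^i * (1-s)^(n-i) * (t^j * (1-t)^(n-j))))"
      by (intro sum.cong refl) (simp add: b_def Bernstein_def)
    then show "(bern_poly (n+1) v s * bern_poly (n+1) w t - bern_poly (n+1) v t * bern_poly (n+1) w s) / (s - t)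
        = (\<Sum>i\<le>n. \<Sum>j\<le>n. b i j * Bernstein n i s * Bernstein n j t)"
      using \<open>s \<noteq> t\<close> unfolding bern_poly_cross_difference M_def by simp
  qed (auto simp: b_def)
  then show ?thesis using assms by (simp add: b_def M_def)
qed

end
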